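(* Let $p>0$ and let $u:\mathbb{R}^4\to\mathbb{R}$ be a solution to $\Delta^2 u=(1-|x|^p)e^{4u}$ in $\mathbb{R}^4$ with $(1-|x|^p)e^{4u}\in L^1(\mathbb{R}^4)$, $\Lambda:=\int_{\mathbb{R}^4}(1-|x|^p)e^{4u}dx$, and $$v(x):=\frac{1}{8\pi^2}\int_{\mathbb{R}^4}\log\left(\frac{|y|}{|x-y|}\right)(1-|y|^p)e^{4u(y)}\,dy.$$ Then for every $\varepsilon>0$ there exists $R=R(\varepsilon)>0$ such that for all $|x|\ge R$, $$v(x)\ge -\frac{1}{8\pi^2}(\Lambda+5\varepsilon)\log|x|-\frac{1}{8\pi^2}\int_{B_1(x)}\log(|x-y|)(1-|y|^p)e^{4u(y)}\,dy.$$
   Context: $B_1(x)$ denotes the open ball of radius $1$ centered at $x$ in $\mathbb{R}^4$. *)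

theory Defs
  imports "HOL-Analysis.Analysis"
begin

definition partial :: "'a::euclidean_space \<Rightarrow> ('a \<Rightarrow> real) \<Rightarrow> 'a \<Rightarrow> real" where
  "partial b f x = deriv (\<lambda>t. f (x + t *\<^sub>R b)) 0"

fun Ck :: "nat \<Rightarrow> ('a::euclidean_space \<Rightarrow> real) \<Rightarrow> bool" where
  "Ck 0 f = continuous_on UNIV f"
| "Ck (Suc k) f = (continuous_on UNIV f \<and>
      (\<forall>b\<in>Basis. \<forall>x. (\<lambda>t. f (x + t *\<^sub>R b)) differentiable (at 0)) \<and>
      (\<forall>b\<in>Basis. Ck k (partial b f)))"

definition laplacian :: "('a::euclidean_space \<Rightarrow> real) \<Rightarrow> 'a \<Rightarrow> real" where
  "laplacian f x = (\<Sum>b\<in>Basis. partial b (partial b f) x)"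

definition bilaplacian :: "('a::euclidean_space \<Rightarrow> real) \<Rightarrow> 'a \<Rightarrow> real" where
  "bilaplacian f = laplacian (laplacian f)"

end

theory Submission
  imports Defs
begin

text \<open>Write f(y) = (1 - |y|^p) e^(4 u(y)); it is integrable, locally bounded, and
  nonpositive for |y| \<ge> 1. Away from y = 0 and y = x the two integrands add up to
  (ln |y| - ln (max 1 |x - y|)) f(y). Choose R0 with |\<integral> f| \<le> \<epsilon> over |y| > R0.
  If |x| \<ge> 2 R0, then for |y| \<le> R0 the distance |x - y| lies between |x|/2 and 2|x|,
  so the kernel is ln |y| - ln |x| up to ln 2, while for |y| > R0 the kernel is at most
  ln |x| + ln 2 and f(y) \<le> 0. Integrating gives the lower bound -(\<Lambda> + 2\<epsilon>) ln |x| - C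
  with C independent of x, and C \<le> 3\<epsilon> ln |x| once |x| is large.
  The logarithmic singularities are integrable because on the unit ball |ln |y|| is at most
  ln 2 times the number of balls of radius 2^(-k) containing y, and these balls have
  summable volumes.\<close>

lemma ennreal_abs_ln_dist_le_dyadic:
  fixes y c :: "'a::euclidean_space"
  shows "ennreal (norm (indicator (cball c 1) y * ln (norm (y - c))))
     \<le> ennreal (ln 2) * (\<Sum>k. indicator (cball c (1 / 2 ^ k)) y)"
proof (cases "y \<in> cball c 1 \<and> y \<noteq> c")
  case False
  then show ?thesis by (auto simp: indicator_def)
next
  case True
  define r where "r = norm (y - c)"
  have r: "0 < r" "r \<le> 1" using True by (auto simp: r_def dist_norm norm_minus_commute)
  define m where "m = nat \<lfloor>- ln r / ln 2\<rfloor>"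
  have "0 \<le> - ln r / ln 2" using r by (simp add: divide_nonpos_pos)
  then have m_le: "real m \<le> - ln r / ln 2" and m_gt: "- ln r / ln 2 < real m + 1"
    unfolding m_def by linarith+
  have "ln r \<le> ln (1 / 2 ^ m)" using m_le by (simp add: ln_div ln_realpow field_simps)
  then have r_le: "r \<le> 1 / 2 ^ m" using r by simp
  have "(\<Sum>k<m + 1. indicator (cball c (1 / 2 ^ k)) y :: ennreal) = (\<Sum>k<m + 1. 1)"
  proof (rule sum.cong)
    fix k assume "k \<in> {..<m + 1}"
    then have "(1 :: real) / 2 ^ m \<le> 1 / 2 ^ k" by (simp add: field_simps)
    with r_le show "indicator (cball c (1 / 2 ^ k)) y = (1 :: ennreal)"
      by (simp add: indicator_def r_def dist_norm norm_minus_commute)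
  qed simp
  also have "\<dots> = ennreal (real m + 1)" by (simp add: ennreal_of_nat_eq_real_of_nat)
  finally have count: "ennreal (real m + 1) \<le> (\<Sum>k. indicator (cball c (1 / 2 ^ k)) y)"
    by (metis sum_le_suminf summableI finite_lessThan zero_le)
  have "ennreal (norm (indicator (cball c 1) y * ln (norm (y - c)))) = ennreal (- ln r)"
    using True r by (simp add: r_def)
  also have "\<dots> \<le> ennreal (ln 2 * (real m + 1))"
    using m_gt by (intro ennreal_leI) (simp add: field_simps)
  also have "\<dots> = ennreal (ln 2) * ennreal (real m + 1)" by (simp add: ennreal_mult')
  also have "\<dots> \<le> ennreal (ln 2) * (\<Sum>k. indicator (cball c (1 / 2 ^ k)) y)"
    using count by (rule mult_left_mono) simp
  finally show ?thesis .
qed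

lemma integrable_cball_ln_dist:
  fixes c :: "'a::euclidean_space"
  shows "integrable lborel (\<lambda>y. indicator (cball c 1) y * ln (norm (y - c)))"
proof (rule integrableI_bounded)
  show "(\<lambda>y. indicator (cball c 1) y * ln (norm (y - c))) \<in> borel_measurable lborel"
    by (intro borel_measurable_times borel_measurable_indicator borel_measurable_ln) auto
  define V where "V = unit_ball_vol (real DIM('a))"
  have "V \<ge> 0" unfolding V_def by (simp add: unit_ball_vol_def)
  have vol: "emeasure lborel (cball c (1 / 2 ^ k)) = ennreal (V * (1 / 2 ^ DIM('a)) ^ k)" for k
    by (subst emeasure_cball) (simp_all add: V_def power_divide mult.commute flip: power_mult)
  have "summable (\<lambda>k. V * (1 / 2 ^ DIM('a)) ^ k)"
    by (intro summable_mult summable_geometric) (simp add: DIM_positive)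
  have "(\<integral>\<^sup>+ y. ennreal (norm (indicator (cball c 1) y * ln (norm (y - c)))) \<partial>lborel)
      \<le> (\<integral>\<^sup>+ y. (\<Sum>k. ennreal (ln 2) * indicator (cball c (1 / 2 ^ k)) y) \<partial>lborel)"
    using ennreal_abs_ln_dist_le_dyadic[where c = c]
    by (intro nn_integral_mono) (simp add: ennreal_suminf_cmult)
  also have "\<dots> = ennreal (ln 2) * (\<Sum>k. emeasure lborel (cball c (1 / 2 ^ k)))"
    by (subst nn_integral_suminf)
      (auto simp: nn_integral_cmult_indicator ennreal_suminf_cmult
        intro!: borel_measurable_times_ennreal borel_measurable_indicator)
  also have "\<dots> = ennreal (ln 2) * ennreal (\<Sum>k. V * (1 / 2 ^ DIM('a)) ^ k)"
    using \<open>summable _\<close> \<open>V \<ge> 0\<close> by (simp add: vol suminf_ennreal2)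
  also have "\<dots> < \<infinity>" by (simp add: ennreal_mult_less_top)
  finally show "(\<integral>\<^sup>+ y. ennreal (norm (indicator (cball c 1) y * ln (norm (y - c)))) \<partial>lborel)
      < \<infinity>" .
qed

lemma integrable_cball_ln_dist_mult:
  fixes f :: "'a::euclidean_space \<Rightarrow> real"
  assumes f: "f \<in> borel_measurable lborel"
    and M: "\<And>y. y \<in> cball c r \<Longrightarrow> \<bar>f y\<bar> \<le> M"
  shows "integrable lborel (\<lambda>y. indicator (cball c r) y * (ln (norm (y - c)) * f y))"
proof (rule Bochner_Integration.integrable_bound)
  show "integrable lborel (\<lambda>y. M * \<bar>indicator (cball c 1) y * ln (norm (y - c))\<bar>
      + M * \<bar>ln r\<bar> * indicator (cball c r) y)"
    using integrable_cball_ln_dist[of c] emeasure_bounded_finite[OF bounded_cball, of c r]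
    by (intro Bochner_Integration.integrable_add integrable_mult_right integrable_abs
        integrable_real_indicator) auto
  show "(\<lambda>y. indicator (cball c r) y * (ln (norm (y - c)) * f y)) \<in> borel_measurable lborel"
    using f by (intro borel_measurable_times borel_measurable_indicator borel_measurable_ln) auto
  show "AE y in lborel. norm (indicator (cball c r) y * (ln (norm (y - c)) * f y))
      \<le> norm (M * \<bar>indicator (cball c 1) y * ln (norm (y - c))\<bar> + M * \<bar>ln r\<bar> * indicator (cball c r) y)"
  proof (intro AE_I2)
    fix y
    show "norm (indicator (cball c r) y * (ln (norm (y - c)) * f y))
      \<le> norm (M * \<bar>indicator (cball c 1) y * ln (norm (y - c))\<bar> + M * \<bar>ln r\<bar> * indicator (cball c r) y)"
    proof (cases "y \<in> cball c r")
      case True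
      have "M \<ge> 0" using M[OF True] by linarith
      have "\<bar>ln (norm (y - c))\<bar> \<le> \<bar>indicator (cball c 1) y * ln (norm (y - c))\<bar> + \<bar>ln r\<bar>"
      proof (cases "norm (y - c) \<le> 1")
        case False
        with True have "ln (norm (y - c)) \<le> ln r"
          by (intro ln_mono) (auto simp: dist_norm norm_minus_commute)
        with False show ?thesis by (simp add: dist_norm norm_minus_commute)
      qed (simp add: dist_norm norm_minus_commute)
      then have "\<bar>ln (norm (y - c))\<bar> * \<bar>f y\<bar>
          \<le> (\<bar>indicator (cball c 1) y * ln (norm (y - c))\<bar> + \<bar>ln r\<bar>) * M"
        using M[OF True] by (intro mult_mono) auto
      also have "\<dots> = M * \<bar>indicator (cball c 1) y * ln (norm (y - c))\<bar>
          + M * \<bar>ln r\<bar> * indicator (cball c r) y"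
        using True by (simp add: algebra_simps)
      finally show ?thesis using True by (simp add: abs_mult)
    qed simp
  qed
qed

lemma ln_max_one_le_add:
  fixes a b X :: real
  assumes "X \<ge> 0" "a \<le> b + X"
  shows "ln (max 1 a) \<le> ln (max 1 b) + ln (1 + X)"
proof -
  have "max 1 a \<le> max 1 b + max 1 b * X"
    using assms mult_right_mono[of 1 "max 1 b" X] by linarith
  then have "ln (max 1 a) \<le> ln (max 1 b * (1 + X))"
    using assms by (subst ln_le_cancel_iff) (auto simp: algebra_simps)
  moreover have "ln (max 1 b * (1 + X)) = ln (max 1 b) + ln (1 + X)"
    using assms by (intro ln_mult_pos) auto
  ultimately show ?thesis by simp
qed

lemma integrable_ln_ratio_mult:
  fixes f :: "'a::euclidean_space \<Rightarrow> real"
  assumes f: "integrable lborel f"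
    and M0: "\<And>y. y \<in> cball 0 1 \<Longrightarrow> \<bar>f y\<bar> \<le> M0"
    and Mx: "\<And>y. y \<in> cball x 1 \<Longrightarrow> \<bar>f y\<bar> \<le> Mx"
  shows "integrable lborel (\<lambda>y. ln (norm y / norm (x - y)) * f y)"
proof -
  have [measurable]: "f \<in> borel_measurable lborel" using f by simp
  \<comment> \<open>Each logarithm splits into its singular part on a unit ball and ln (max 1 _);
    the difference of the latter parts is bounded by ln (1 + |x|).\<close>
  let ?g = "\<lambda>y. (ln (max 1 (norm y)) - ln (max 1 (norm (y - x)))) * f y"
  have "integrable lborel ?g"
  proof (rule Bochner_Integration.integrable_bound)
    show "integrable lborel (\<lambda>y. ln (1 + norm x) * \<bar>f y\<bar>)" using f by simp
    show "?g \<in> borel_measurable lborel" by measurable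
    have "\<bar>ln (max 1 (norm y)) - ln (max 1 (norm (y - x)))\<bar> \<le> ln (1 + norm x)" for y
    proof -
      have "norm y \<le> norm (y - x) + norm x" "norm (y - x) \<le> norm y + norm x"
        using norm_triangle_ineq2[of y x] norm_triangle_ineq4[of y x] by linarith+
      then show ?thesis
        using ln_max_one_le_add[of "norm x" "norm y" "norm (y - x)"]
          ln_max_one_le_add[of "norm x" "norm (y - x)" "norm y"]
        unfolding abs_le_iff by simp
    qed
    then show "AE y in lborel. norm (?g y) \<le> norm (ln (1 + norm x) * \<bar>f y\<bar>)"
      by (intro AE_I2) (simp add: abs_mult mult_right_mono)
  qed
  moreover have "integrable lborel (\<lambda>y. indicator (cball 0 1) y * (ln (norm (y - 0)) * f y))"
    using M0 by (intro integrable_cball_ln_dist_mult) auto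
  moreover have "integrable lborel (\<lambda>y. indicator (cball x 1) y * (ln (norm (y - x)) * f y))"
    using Mx by (intro integrable_cball_ln_dist_mult) auto
  ultimately have "integrable lborel (\<lambda>y. indicator (cball 0 1) y * (ln (norm (y - 0)) * f y)
      - indicator (cball x 1) y * (ln (norm (y - x)) * f y) + ?g y)"
    by (intro Bochner_Integration.integrable_add Bochner_Integration.integrable_diff)
  then show ?thesis
  proof (rule integrable_cong_AE_imp)
    show "(\<lambda>y. ln (norm y / norm (x - y)) * f y) \<in> borel_measurable lborel" by measurable
    show "AE y in lborel. indicator (cball 0 1) y * (ln (norm (y - 0)) * f y)
        - indicator (cball x 1) y * (ln (norm (y - x)) * f y) + ?g y
        = ln (norm y / norm (x - y)) * f y"
      using AE_lborel_singleton[of 0] AE_lborel_singleton[of x]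
    proof eventually_elim
      case (elim y)
      have ln_parts: "indicator (cball c 1) y * ln (norm (y - c)) + ln (max 1 (norm (y - c)))
          = ln (norm (y - c))" for c :: 'a
        by (simp add: indicator_def dist_norm norm_minus_commute max_def)
      have "indicator (cball 0 1) y * (ln (norm (y - 0)) * f y)
          - indicator (cball x 1) y * (ln (norm (y - x)) * f y) + ?g y
        = ((indicator (cball 0 1) y * ln (norm (y - 0)) + ln (max 1 (norm (y - 0))))
          - (indicator (cball x 1) y * ln (norm (y - x)) + ln (max 1 (norm (y - x))))) * f y"
        by (simp add: algebra_simps)
      also have "\<dots> = (ln (norm y) - ln (norm (x - y))) * f y"
        by (simp only: ln_parts) (simp add: norm_minus_commute)
      also have "\<dots> = ln (norm y / norm (x - y)) * f y"
        using elim by (simp add: ln_div)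
      finally show ?case .
    qed
  qed
qed

lemma integral_outside_cball_small:
  fixes f :: "'a::euclidean_space \<Rightarrow> real"
  assumes f: "integrable lborel f" and "e > 0"
  obtains R where "R \<ge> 1" "\<bar>\<integral>y\<in>- cball 0 R. f y \<partial>lborel\<bar> \<le> e"
proof -
  have [measurable]: "f \<in> borel_measurable lborel" using f by simp
  have "(\<lambda>n. \<integral>y. indicator (- cball 0 (real n)) y * f y \<partial>lborel) \<longlonglongrightarrow> (\<integral>y. 0 \<partial>(lborel :: 'a measure))"
  proof (rule integral_dominated_convergence[where w = "\<lambda>y. \<bar>f y\<bar>"])
    show "integrable lborel (\<lambda>y. \<bar>f y\<bar>)" using f by simp
    have "- cball (0::'a) r \<in> sets lborel" for r by (simp add: borel_open)
    then show "(\<lambda>y. indicator (- cball 0 (real n)) y * f y) \<in> borel_measurable lborel" for n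
      by measurable
    show "AE y in lborel. (\<lambda>n. indicator (- cball 0 (real n)) y * f y) \<longlonglongrightarrow> 0"
    proof (intro AE_I2 tendsto_eventually)
      fix y :: 'a
      obtain N :: nat where "norm y \<le> real N" using real_arch_simple by blast
      then show "\<forall>\<^sub>F n in sequentially. indicator (- cball 0 (real n)) y * f y = 0"
        by (intro eventually_sequentiallyI[of N]) (auto simp: indicator_def)
    qed
    show "AE y in lborel. norm (indicator (- cball 0 (real n)) y * f y) \<le> \<bar>f y\<bar>" for n
      by (intro AE_I2) (auto simp: indicator_def)
  qed simp
  then obtain N where "\<bar>\<integral>y. indicator (- cball 0 (real n)) y * f y \<partial>lborel\<bar> < e" if "n \<ge> N" for n
    using \<open>e > 0\<close> by (auto simp: LIMSEQ_def dist_norm)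
  then show ?thesis
    by (intro that[of "real (max N 1)"]) (auto simp: set_lebesgue_integral_def less_imp_le)
qed

lemma ln_kernel_eq:
  fixes x y :: "'a::real_normed_vector"
  assumes "y \<noteq> 0" "y \<noteq> x"
  shows "ln (norm y / norm (x - y)) + indicator (ball x 1) y * ln (norm (x - y))
       = ln (norm y) - ln (max 1 (norm (x - y)))"
  using assms by (auto simp: ln_div indicator_def dist_norm max_def)

lemma ln_kernel_le:
  fixes x y :: "'a::real_normed_vector"
  assumes "1 \<le> norm x"
  shows "ln (norm y) - ln (max 1 (norm (x - y))) \<le> ln (norm x) + ln 2"
proof -
  have "ln (norm y) \<le> ln (max 1 (norm y))"
    by (cases "y = 0") (auto intro: ln_mono)
  also have "\<dots> \<le> ln (max 1 (norm (x - y))) + ln (1 + norm x)"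
    using norm_triangle_ineq2[of y x] by (intro ln_max_one_le_add) (auto simp: norm_minus_commute)
  also have "ln (1 + norm x) \<le> ln (2 * norm x)"
    using assms by (intro ln_mono) auto
  also have "\<dots> = ln (norm x) + ln 2"
    using assms ln_mult_pos[of 2 "norm x"] by linarith
  finally show ?thesis by simp
qed

lemma ln_dist_near_ln_norm:
  fixes x y :: "'a::real_normed_vector"
  assumes "norm y \<le> R" "2 * R \<le> norm x" "1 \<le> R"
  shows "1 \<le> norm (x - y)" "\<bar>ln (norm (x - y)) - ln (norm x)\<bar> \<le> ln 2"
proof -
  have lower: "norm x / 2 \<le> norm (x - y)" and upper: "norm (x - y) \<le> 2 * norm x"
    using assms norm_triangle_ineq2[of x y] norm_triangle_ineq4[of x y] by linarith+
  then show "1 \<le> norm (x - y)" using assms by linarith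
  have "norm x > 0" using assms by linarith
  have "ln (norm x) - ln 2 \<le> ln (norm (x - y))"
    using ln_mono[OF lower] \<open>norm x > 0\<close> by (simp add: ln_div)
  moreover have "ln (norm (x - y)) \<le> ln (norm x) + ln 2"
    using ln_mono[OF upper] \<open>1 \<le> norm (x - y)\<close> ln_mult_pos[OF _ \<open>norm x > 0\<close>, of 2]
    by linarith
  ultimately show "\<bar>ln (norm (x - y)) - ln (norm x)\<bar> \<le> ln 2" by linarith
qed

text \<open>The left-hand side integrates to integrals of f independent of x, apart from the factor
  ln |x|; outside cball 0 R, where z \<le> 0, it equals (ln |x| + ln 2) z.\<close>
lemma ln_kernel_mult_lower_bound:
  fixes x y :: "'a::real_normed_vector" and R z :: real
  assumes R: "1 \<le> R" "2 * R \<le> norm x" and y: "y \<noteq> 0" "y \<noteq> x"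
    and sign: "R < norm y \<Longrightarrow> z \<le> 0"
  shows "indicator (cball 0 R) y * (ln (norm y) * z) - (ln (norm x) * z + ln 2 * \<bar>z\<bar>)
      + 2 * ln (norm x) * (indicator (- cball 0 R) y * z)
    \<le> ln (norm y / norm (x - y)) * z + indicator (ball x 1) y * (ln (norm (x - y)) * z)"
proof -
  have kernel: "ln (norm y / norm (x - y)) * z + indicator (ball x 1) y * (ln (norm (x - y)) * z)
      = (ln (norm y) - ln (max 1 (norm (x - y)))) * z"
    unfolding ln_kernel_eq[OF y, symmetric] by (simp add: algebra_simps)
  show ?thesis
  proof (cases "norm y \<le> R")
    case True
    note near = ln_dist_near_ln_norm[OF True R(2,1)]
    have "\<bar>(ln (norm (x - y)) - ln (norm x)) * z\<bar> \<le> ln 2 * \<bar>z\<bar>"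
      using mult_right_mono[OF near(2) abs_ge_zero] by (simp add: abs_mult)
    then have "(ln (norm (x - y)) - ln (norm x)) * z \<le> ln 2 * \<bar>z\<bar>"
      by (rule order_trans[OF abs_ge_self])
    then show ?thesis
      using True near(1) unfolding kernel by (simp add: indicator_def algebra_simps)
  next
    case False
    then have "z \<le> 0" by (intro sign) simp
    have "ln (norm y) - ln (max 1 (norm (x - y))) \<le> ln (norm x) + ln 2"
      using R by (intro ln_kernel_le) linarith
    then have "(ln (norm x) + ln 2) * z \<le> (ln (norm y) - ln (max 1 (norm (x - y)))) * z"
      using \<open>z \<le> 0\<close> by (rule mult_right_mono_neg)
    then show ?thesis
      using False \<open>z \<le> 0\<close> unfolding kernel by (simp add: indicator_def algebra_simps)
  qed
qed

lemma ln_potential_lower_bound_at: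
  fixes f :: "'a::euclidean_space \<Rightarrow> real"
  assumes f: "integrable lborel f"
    and bdd: "\<And>c r. \<exists>M. \<forall>y\<in>cball c r. \<bar>f y\<bar> \<le> M"
    and sign: "\<And>y. R < norm y \<Longrightarrow> f y \<le> 0"
    and R: "1 \<le> R" "2 * R \<le> norm x"
  shows "(\<integral>y\<in>cball 0 R. ln (norm y) * f y \<partial>lborel) - ln (norm x) * (\<integral>y. f y \<partial>lborel)
      - ln 2 * (\<integral>y. \<bar>f y\<bar> \<partial>lborel) + 2 * ln (norm x) * (\<integral>y\<in>- cball 0 R. f y \<partial>lborel)
    \<le> (\<integral>y. ln (norm y / norm (x - y)) * f y \<partial>lborel) + (\<integral>y\<in>ball x 1. ln (norm (x - y)) * f y \<partial>lborel)"
proof -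
  have [measurable]: "f \<in> borel_measurable lborel" using f by simp
  have outside: "- cball (0::'a) R \<in> sets lborel" by (simp add: borel_open)
  obtain M0 Mx MR where M0: "\<forall>y\<in>cball 0 1. \<bar>f y\<bar> \<le> M0" and Mx: "\<forall>y\<in>cball x 1. \<bar>f y\<bar> \<le> Mx"
    and MR: "\<forall>y\<in>cball 0 R. \<bar>f y\<bar> \<le> MR"
    using bdd by metis
  have int_inner: "integrable lborel (\<lambda>y. indicator (cball 0 R) y * (ln (norm y) * f y))"
    using integrable_cball_ln_dist_mult[of f 0 R MR] MR by simp
  have int_outer: "integrable lborel (\<lambda>y. indicator (- cball 0 R) y * f y)"
    using integrable_mult_indicator[OF outside f] by simp
  have int_ratio: "integrable lborel (\<lambda>y. ln (norm y / norm (x - y)) * f y)"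
    using integrable_ln_ratio_mult[OF f] M0 Mx by blast
  have "integrable lborel (\<lambda>y. indicator (ball x 1) y *\<^sub>R (indicator (cball x 1) y * (ln (norm (y - x)) * f y)))"
    using integrable_cball_ln_dist_mult[of f x 1 Mx] Mx by (intro integrable_mult_indicator) auto
  moreover have "indicator (ball x 1) y *\<^sub>R (indicator (cball x 1) y * (ln (norm (y - x)) * f y))
      = indicator (ball x 1) y * (ln (norm (x - y)) * f y)" for y
    by (auto simp: indicator_def norm_minus_commute)
  ultimately have int_ball: "integrable lborel (\<lambda>y. indicator (ball x 1) y * (ln (norm (x - y)) * f y))"
    by (simp only:)
  define \<phi> where "\<phi> y = indicator (cball 0 R) y * (ln (norm y) * f y) - (ln (norm x) * f y + ln 2 * \<bar>f y\<bar>)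
      + 2 * ln (norm x) * (indicator (- cball 0 R) y * f y)" for y
  have "(\<integral>y\<in>cball 0 R. ln (norm y) * f y \<partial>lborel) - ln (norm x) * (\<integral>y. f y \<partial>lborel)
      - ln 2 * (\<integral>y. \<bar>f y\<bar> \<partial>lborel) + 2 * ln (norm x) * (\<integral>y\<in>- cball 0 R. f y \<partial>lborel)
      = (\<integral>y. \<phi> y \<partial>lborel)"
    unfolding \<phi>_def set_lebesgue_integral_def using f int_inner int_outer by simp
  also have "\<dots> \<le> (\<integral>y. ln (norm y / norm (x - y)) * f y
      + indicator (ball x 1) y * (ln (norm (x - y)) * f y) \<partial>lborel)"
  proof (rule integral_mono_AE)
    show "integrable lborel \<phi>" unfolding \<phi>_def using f int_inner int_outer by simp
    show "AE y in lborel. \<phi> y \<le> ln (norm y / norm (x - y)) * f y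
        + indicator (ball x 1) y * (ln (norm (x - y)) * f y)"
      using AE_lborel_singleton[of 0] AE_lborel_singleton[of x]
    proof eventually_elim
      case (elim y)
      show ?case unfolding \<phi>_def by (rule ln_kernel_mult_lower_bound[OF R elim sign])
    qed
  qed (use int_ratio int_ball in simp)
  also have "\<dots> = (\<integral>y. ln (norm y / norm (x - y)) * f y \<partial>lborel)
      + (\<integral>y\<in>ball x 1. ln (norm (x - y)) * f y \<partial>lborel)"
    unfolding set_lebesgue_integral_def using int_ratio int_ball by simp
  finally show ?thesis .
qed

lemma ln_potential_lower_bound:
  fixes f :: "'a::euclidean_space \<Rightarrow> real"
  assumes f: "integrable lborel f"
    and bdd: "\<And>c r. \<exists>M. \<forall>y\<in>cball c r. \<bar>f y\<bar> \<le> M"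
    and sign: "\<And>y. 1 \<le> norm y \<Longrightarrow> f y \<le> 0"
    and "\<epsilon> > 0"
  shows "\<exists>R>0. \<forall>x. R \<le> norm x \<longrightarrow> - ((\<integral>y. f y \<partial>lborel) + 5 * \<epsilon>) * ln (norm x)
      \<le> (\<integral>y. ln (norm y / norm (x - y)) * f y \<partial>lborel) + (\<integral>y\<in>ball x 1. ln (norm (x - y)) * f y \<partial>lborel)"
proof -
  obtain R0 where R0: "1 \<le> R0" and tail: "\<bar>\<integral>y\<in>- cball 0 R0. f y \<partial>lborel\<bar> \<le> \<epsilon>"
    using integral_outside_cball_small[OF f \<open>\<epsilon> > 0\<close>] by blast
  define C where "C = ln 2 * (\<integral>y. \<bar>f y\<bar> \<partial>lborel) - (\<integral>y\<in>cball 0 R0. ln (norm y) * f y \<partial>lborel)"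
  define R where "R = max (2 * R0) (exp (C / (3 * \<epsilon>)))"
  have "- ((\<integral>y. f y \<partial>lborel) + 5 * \<epsilon>) * ln (norm x)
      \<le> (\<integral>y. ln (norm y / norm (x - y)) * f y \<partial>lborel) + (\<integral>y\<in>ball x 1. ln (norm (x - y)) * f y \<partial>lborel)"
    if x: "R \<le> norm x" for x :: 'a
  proof -
    have "2 * R0 \<le> norm x" and "exp (C / (3 * \<epsilon>)) \<le> norm x" using x by (simp_all add: R_def)
    then have "C / (3 * \<epsilon>) \<le> ln (norm x)"
      using exp_gt_zero ln_mono ln_exp by metis
    then have absorb: "C \<le> 3 * \<epsilon> * ln (norm x)" using \<open>\<epsilon> > 0\<close> by (simp add: field_simps)
    have "0 \<le> ln (norm x)" using \<open>2 * R0 \<le> norm x\<close> R0 by simp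
    then have "ln (norm x) * - \<epsilon> \<le> ln (norm x) * (\<integral>y\<in>- cball 0 R0. f y \<partial>lborel)"
      using tail by (intro mult_left_mono) auto
    moreover have "R0 < norm y \<Longrightarrow> f y \<le> 0" for y using sign R0 by simp
    note ln_potential_lower_bound_at[OF f bdd this R0 \<open>2 * R0 \<le> norm x\<close>]
    ultimately show ?thesis using absorb unfolding C_def by (simp add: algebra_simps)
  qed
  moreover have "R > 0" using R0 by (simp add: R_def)
  ultimately show ?thesis by blast
qed

lemma continuous_on_weight:
  fixes u :: "'a::real_normed_vector \<Rightarrow> real"
  assumes "continuous_on UNIV u" "p > 0"
  shows "continuous_on UNIV (\<lambda>y. (1 - norm y powr p) * exp (4 * u y))"
proof -
  have "continuous_on UNIV (\<lambda>y. norm y powr p)"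
    by (rule continuous_on_powr') (use assms in \<open>auto intro: continuous_intros\<close>)
  moreover have "continuous_on UNIV (\<lambda>y. exp (4 * u y))"
    using assms by (intro continuous_intros)
  ultimately show ?thesis by (intro continuous_on_mult continuous_on_diff continuous_on_const)
qed

lemma continuous_on_bounded_on_cball:
  fixes f :: "'a::heine_borel \<Rightarrow> real"
  assumes "continuous_on UNIV f"
  shows "\<exists>M. \<forall>y\<in>cball c r. \<bar>f y\<bar> \<le> M"
proof -
  have "bounded (f ` cball c r)"
    using assms by (meson compact_cball compact_continuous_image compact_imp_bounded
        continuous_on_subset subset_UNIV)
  then show ?thesis by (auto simp: bounded_iff)
qed

theorem lemma3p2:
  fixes u :: "real^4 \<Rightarrow> real" and p :: real
    and \<Lambda> :: real and v :: "real^4 \<Rightarrow> real"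
  assumes p_pos: "p > 0"
    and u_C4: "Ck 4 u"
    and pde: "\<forall>x. bilaplacian u x = (1 - norm x powr p) * exp (4 * u x)"
    and L1: "integrable lborel (\<lambda>y. (1 - norm y powr p) * exp (4 * u y))"
    and Lambda_def: "\<Lambda> = (\<integral>y. (1 - norm y powr p) * exp (4 * u y) \<partial>lborel)"
    and v_def: "\<forall>x. v x = 1 / (8 * pi\<^sup>2) *
        (\<integral>y. ln (norm y / norm (x - y)) * ((1 - norm y powr p) * exp (4 * u y)) \<partial>lborel)"
  shows "\<forall>\<epsilon>>0. \<exists>R>0. \<forall>x. norm x \<ge> R \<longrightarrow>
     v x \<ge> - 1 / (8 * pi\<^sup>2) * (\<Lambda> + 5 * \<epsilon>) * ln (norm x)
           - 1 / (8 * pi\<^sup>2) *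
             (\<integral>y\<in>ball x 1. ln (norm (x - y)) * ((1 - norm y powr p) * exp (4 * u y)) \<partial>lborel)"
proof -
  define f where "f y = (1 - norm y powr p) * exp (4 * u y)" for y :: "real^4"
  define I B where "I x = (\<integral>y. ln (norm y / norm (x - y)) * f y \<partial>lborel)"
    and "B x = (\<integral>y\<in>ball x 1. ln (norm (x - y)) * f y \<partial>lborel)" for x :: "real^4"
  have "continuous_on UNIV u" using u_C4 by (simp add: eval_nat_numeral)
  then have bdd: "\<exists>M. \<forall>y\<in>cball c r. \<bar>f y\<bar> \<le> M" for c r
    unfolding f_def using p_pos by (intro continuous_on_bounded_on_cball continuous_on_weight)
  have sign: "f y \<le> 0" if "1 \<le> norm y" for y
    using that p_pos ge_one_powr_ge_zero[of "norm y" p] by (simp add: f_def mult_nonpos_nonneg)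
  have "\<exists>R>0. \<forall>x. R \<le> norm x \<longrightarrow> - (\<Lambda> + 5 * \<epsilon>) * ln (norm x) \<le> I x + B x"
    if "\<epsilon> > 0" for \<epsilon>
    using ln_potential_lower_bound[OF L1[folded f_def] bdd sign that]
    unfolding Lambda_def I_def B_def f_def by blast
  moreover have "- 1 / (8 * pi\<^sup>2) * a * ln (norm x) - 1 / (8 * pi\<^sup>2) * B x \<le> v x"
    if "- a * ln (norm x) \<le> I x + B x" for a x
  proof -
    define c where "c = 1 / (8 * pi\<^sup>2)"
    have "c * (- a * ln (norm x)) \<le> c * (I x + B x)"
      using that by (intro mult_left_mono) (simp_all add: c_def)
    moreover have "v x = c * I x" using v_def by (simp add: c_def I_def f_def)
    moreover have "- 1 / (8 * pi\<^sup>2) = - c" by (simp add: c_def)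
    ultimately show ?thesis by (simp add: algebra_simps)
  qed
  ultimately show ?thesis unfolding B_def f_def by blast
qed

end
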